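(* The set $\mathfrak F_+$ of all filtering symmetric linear operators on $\mathfrak g$ with nonnegative spectrum and trace $1$ is a compact semialgebraic subset of the space of linear operators on $\mathfrak g$.
   Context: $\mathfrak g$ is the Lie algebra of a compact Lie group, with a Euclidean inner product $Q$ satisfying $Q([X,Y],Z)=Q(X,[Y,Z])$ for all $X,Y,Z$. A linear operator $A$ on $\mathfrak g$ is symmetric if $Q(AX,Y)=Q(X,AY)$ for all $X,Y$. For a symmetric $A$ and $a\in\mathbb R$ let $F_a$ be the span of all eigenvectors of $A$ with eigenvalue $\le a$. A symmetric $A$ is filtering if $[F_a,F_b]\subseteq F_{a+b}$ for all $a,b\in\mathbb R$. *)

theory Defs
  imports "HOL-Analysis.Analysis"
begin

text \<open>The Lie algebra g is modelled as real^'n (dimension CARD('n)) with a bracket br.\<close>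

definition lie_algebra :: "(real^'n \<Rightarrow> real^'n \<Rightarrow> real^'n) \<Rightarrow> bool" where
  "lie_algebra br \<longleftrightarrow> bilinear br \<and> (\<forall>x. br x x = 0) \<and>
     (\<forall>x y z. br x (br y z) + br y (br z x) + br z (br x y) = 0)"

definition invariant_inner_product ::
  "(real^'n \<Rightarrow> real^'n \<Rightarrow> real) \<Rightarrow> (real^'n \<Rightarrow> real^'n \<Rightarrow> real^'n) \<Rightarrow> bool" where
  "invariant_inner_product Q br \<longleftrightarrow> bilinear Q \<and> (\<forall>x y. Q x y = Q y x) \<and>
     (\<forall>x. x \<noteq> 0 \<longrightarrow> Q x x > 0) \<and> (\<forall>X Y Z. Q (br X Y) Z = Q X (br Y Z))"

definition symmetric_op :: "(real^'n \<Rightarrow> real^'n \<Rightarrow> real) \<Rightarrow> real^'n^'n \<Rightarrow> bool" where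
  "symmetric_op Q A \<longleftrightarrow> (\<forall>x y. Q (A *v x) y = Q x (A *v y))"

definition filt_space :: "real^'n^'n \<Rightarrow> real \<Rightarrow> (real^'n) set" where
  "filt_space A a = span {v. v \<noteq> 0 \<and> (\<exists>c. c \<le> a \<and> A *v v = c *\<^sub>R v)}"

definition filtering ::
  "(real^'n \<Rightarrow> real^'n \<Rightarrow> real) \<Rightarrow> (real^'n \<Rightarrow> real^'n \<Rightarrow> real^'n) \<Rightarrow> real^'n^'n \<Rightarrow> bool" where
  "filtering Q br A \<longleftrightarrow> symmetric_op Q A \<and>
     (\<forall>a b. span {br x y | x y. x \<in> filt_space A a \<and> y \<in> filt_space A b} \<subseteq> filt_space A (a + b))"

definition nonneg_spectrum :: "real^'n^'n \<Rightarrow> bool" where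
  "nonneg_spectrum A \<longleftrightarrow> (\<forall>c v. v \<noteq> 0 \<and> A *v v = c *\<^sub>R v \<longrightarrow> c \<ge> 0)"

definition F_plus ::
  "(real^'n \<Rightarrow> real^'n \<Rightarrow> real) \<Rightarrow> (real^'n \<Rightarrow> real^'n \<Rightarrow> real^'n) \<Rightarrow> (real^'n^'n) set" where
  "F_plus Q br = {A. filtering Q br A \<and> nonneg_spectrum A \<and> trace A = 1}"

inductive poly_fun :: "('a::euclidean_space \<Rightarrow> real) \<Rightarrow> bool" where
  poly_const: "poly_fun (\<lambda>x. c)"
| poly_coord: "b \<in> Basis \<Longrightarrow> poly_fun (\<lambda>x. x \<bullet> b)"
| poly_add: "poly_fun p \<Longrightarrow> poly_fun q \<Longrightarrow> poly_fun (\<lambda>x. p x + q x)"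
| poly_mult: "poly_fun p \<Longrightarrow> poly_fun q \<Longrightarrow> poly_fun (\<lambda>x. p x * q x)"

inductive semialgebraic :: "('a::euclidean_space) set \<Rightarrow> bool" where
  sa_zero: "poly_fun p \<Longrightarrow> semialgebraic {x. p x = 0}"
| sa_pos: "poly_fun p \<Longrightarrow> semialgebraic {x. p x > 0}"
| sa_union: "semialgebraic S \<Longrightarrow> semialgebraic T \<Longrightarrow> semialgebraic (S \<union> T)"
| sa_compl: "semialgebraic S \<Longrightarrow> semialgebraic (- S)"

end

theory Submission
  imports Defs "HOL-Computational_Algebra.Polynomial"
begin

text \<open>
  A symmetric operator \<open>A\<close> has a \<open>Q\<close>-orthonormal eigenframe \<open>v\<close> with eigenvalues \<open>\<lambda>\<close>.
  In such a frame, \<open>A\<close> is filtering iff the weights \<open>w\<^sub>i\<^sub>j\<^sub>l = Q([v\<^sub>i,v\<^sub>j],v\<^sub>l)\<^sup>2\<close> vanish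
  whenever \<open>\<mu>\<^sub>i\<^sub>j\<^sub>l = \<lambda>\<^sub>i + \<lambda>\<^sub>j - \<lambda>\<^sub>l < 0\<close>; the spectrum is nonnegative iff the Gram matrix
  \<open>Q(Ae\<^sub>a,e\<^sub>b)\<close> is positive semidefinite; and \<open>trace A = \<Sum>\<lambda>\<^sub>i\<close>.
  The moments \<open>m\<^sub>k = \<Sum> w\<^sub>i\<^sub>j\<^sub>l \<mu>\<^sub>i\<^sub>j\<^sub>l\<^sup>k\<close> do not depend on the frame: they are the pairings
  \<open>\<langle>D\<^sup>kT, T\<rangle>\<close> of the structure form \<open>T(x,y,z) = Q([x,y],z)\<close> with its images under the
  derivation \<open>D\<^sub>A\<close>, hence polynomials in the entries of \<open>A\<close>. The weights sit on
  \<open>[0,\<infinity>)\<close> iff the Hankel matrix \<open>(m\<^sub>a\<^sub>+\<^sub>b\<^sub>+\<^sub>1)\<close> is positive semidefinite, and a real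
  symmetric matrix \<open>M\<close> is positive semidefinite iff all coefficients of \<open>det (t + M)\<close> are
  nonnegative. So \<open>F\<^sub>+\<close> is cut out by finitely many polynomial inequalities, which makes it
  closed and semialgebraic; it is bounded since its eigenvalues lie in \<open>[0,1]\<close>.
\<close>

section \<open>Polynomial functions and basic closed semialgebraic sets\<close>

lemma poly_fun_scale: "poly_fun p \<Longrightarrow> poly_fun (\<lambda>x. c * p x)"
  by (rule poly_mult[OF poly_const])

lemma poly_fun_diff: "poly_fun p \<Longrightarrow> poly_fun q \<Longrightarrow> poly_fun (\<lambda>x. p x - q x)"
  using poly_add[OF _ poly_fun_scale[of q "-1"], of p] by simp

lemma poly_fun_sum:
  "finite S \<Longrightarrow> (\<And>i. i \<in> S \<Longrightarrow> poly_fun (f i)) \<Longrightarrow> poly_fun (\<lambda>x. \<Sum>i\<in>S. f i x)"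
  by (induction S rule: finite_induct) (auto intro: poly_add poly_const)

lemma poly_fun_matrix_entry: "poly_fun (\<lambda>A::real^'n^'m. A $ i $ j)"
proof -
  have "axis i (axis j 1) \<in> (Basis :: (real^'n^'m) set)"
    by (auto simp: Basis_vec_def)
  from poly_coord[OF this] show ?thesis
    by (simp add: inner_axis)
qed

lemma continuous_on_poly_fun: "poly_fun p \<Longrightarrow> continuous_on S p"
  by (induction rule: poly_fun.induct) (auto intro!: continuous_intros)

lemma semialgebraic_Int: "semialgebraic S \<Longrightarrow> semialgebraic T \<Longrightarrow> semialgebraic (S \<inter> T)"
  using sa_compl[OF sa_union[OF sa_compl sa_compl]] by simp

definition nonneg_locus :: "('a::euclidean_space \<Rightarrow> real) set \<Rightarrow> 'a set" where
  "nonneg_locus P = {x. \<forall>p\<in>P. 0 \<le> p x}"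

definition basic_closed_semialgebraic :: "'a::euclidean_space set \<Rightarrow> bool" where
  "basic_closed_semialgebraic S \<longleftrightarrow>
     (\<exists>P. finite P \<and> (\<forall>p\<in>P. poly_fun p) \<and> S = nonneg_locus P)"

lemma semialgebraic_nonneg_locus:
  "finite P \<Longrightarrow> (\<And>p. p \<in> P \<Longrightarrow> poly_fun p) \<Longrightarrow> semialgebraic (nonneg_locus P)"
proof (induction P rule: finite_induct)
  case empty
  show ?case using sa_zero[OF poly_const[of 0]] by (simp add: nonneg_locus_def)
next
  case (insert p P)
  have "semialgebraic (- {x. 0 < - p x})"
    using insert.prems poly_fun_scale[of p "-1"] by (intro sa_compl sa_pos) simp
  moreover have "nonneg_locus (insert p P) = - {x. 0 < - p x} \<inter> nonneg_locus P"
    by (auto simp: nonneg_locus_def)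
  ultimately show ?case using insert by (simp add: semialgebraic_Int)
qed

lemma closed_nonneg_locus: "(\<And>p. p \<in> P \<Longrightarrow> poly_fun p) \<Longrightarrow> closed (nonneg_locus P)"
proof -
  assume "\<And>p. p \<in> P \<Longrightarrow> poly_fun p"
  then have "closed (\<Inter>p\<in>P. {x. 0 \<le> p x})"
    by (intro closed_INT ballI closed_Collect_le continuous_on_const continuous_on_poly_fun) auto
  moreover have "nonneg_locus P = (\<Inter>p\<in>P. {x. 0 \<le> p x})"
    by (auto simp: nonneg_locus_def)
  ultimately show ?thesis by simp
qed

lemma basic_closed_semialgebraic_imp:
  assumes "basic_closed_semialgebraic S"
  shows "semialgebraic S" and "closed S"
  using assms semialgebraic_nonneg_locus closed_nonneg_locus
  unfolding basic_closed_semialgebraic_def by blast+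

lemma basic_closed_semialgebraic_all_nonneg:
  assumes "finite K" and "\<And>k. k \<in> K \<Longrightarrow> poly_fun (p k)"
  shows "basic_closed_semialgebraic {x. \<forall>k\<in>K. 0 \<le> p k x}"
  unfolding basic_closed_semialgebraic_def nonneg_locus_def
  by (rule exI[of _ "p ` K"]) (use assms in auto)

lemma basic_closed_semialgebraic_eq:
  assumes "poly_fun p" and "poly_fun q"
  shows "basic_closed_semialgebraic {x. p x = q x}"
  unfolding basic_closed_semialgebraic_def nonneg_locus_def
  by (rule exI[of _ "{\<lambda>x. p x - q x, \<lambda>x. q x - p x}"]) (auto intro: poly_fun_diff assms)

lemma basic_closed_semialgebraic_Int:
  assumes "basic_closed_semialgebraic S" and "basic_closed_semialgebraic T"
  shows "basic_closed_semialgebraic (S \<inter> T)"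
proof -
  obtain P P' where "finite P" "\<forall>p\<in>P. poly_fun p" "S = nonneg_locus P"
    and "finite P'" "\<forall>p\<in>P'. poly_fun p" "T = nonneg_locus P'"
    using assms unfolding basic_closed_semialgebraic_def by blast
  then show ?thesis unfolding basic_closed_semialgebraic_def nonneg_locus_def
    by (intro exI[of _ "P \<union> P'"]) auto
qed

lemma basic_closed_semialgebraic_INT:
  "finite I \<Longrightarrow> (\<And>i. i \<in> I \<Longrightarrow> basic_closed_semialgebraic (S i)) \<Longrightarrow>
    basic_closed_semialgebraic (\<Inter>i\<in>I. S i)"
proof (induction I rule: finite_induct)
  case empty
  show ?case unfolding basic_closed_semialgebraic_def nonneg_locus_def
    by (intro exI[of _ "{}"]) auto
next
  case (insert i I)
  then show ?case by (simp add: basic_closed_semialgebraic_Int)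
qed

definition poly_map :: "('a::euclidean_space \<Rightarrow> real^'m) \<Rightarrow> bool" where
  "poly_map f \<longleftrightarrow> (\<forall>i. poly_fun (\<lambda>x. f x $ i))"

lemma poly_map_const: "poly_map (\<lambda>x. c)"
  unfolding poly_map_def by (auto intro: poly_const)

lemma poly_map_matrix_vector_mult:
  "poly_map x \<Longrightarrow> poly_map (\<lambda>A::real^'n^'m. A *v x A)"
  unfolding poly_map_def matrix_vector_mult_def
  by (auto intro!: poly_fun_sum poly_mult poly_fun_matrix_entry)

lemma bilinear_axis_expansion:
  assumes "bilinear f"
  shows "f (x::real^'n) (y::real^'k) =
    (\<Sum>p\<in>UNIV. \<Sum>q\<in>UNIV. (x$p * y$q) *\<^sub>R f (axis p 1) (axis q 1))"
proof -
  have "f x y = f (\<Sum>p\<in>UNIV. x$p *\<^sub>R axis p 1) (\<Sum>q\<in>UNIV. y$q *\<^sub>R axis q 1)"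
    using basis_expansion[of x] basis_expansion[of y] by (simp add: scalar_mult_eq_scaleR)
  also have "\<dots> = (\<Sum>(p,q)\<in>UNIV \<times> UNIV. (x$p * y$q) *\<^sub>R f (axis p 1) (axis q 1))"
    by (simp add: bilinear_sum[OF assms] bilinear_lmul[OF assms] bilinear_rmul[OF assms]
        mult.commute)
  finally show ?thesis by (simp add: sum.cartesian_product)
qed

lemma poly_fun_bilinear:
  assumes "bilinear g" and "poly_map x" and "poly_map y"
  shows "poly_fun (\<lambda>z. g (x z) (y z) :: real)"
proof -
  have "poly_fun (\<lambda>z. \<Sum>p\<in>UNIV. \<Sum>q\<in>UNIV. (x z $ p * y z $ q) * g (axis p 1) (axis q 1))"
    using assms(2,3) unfolding poly_map_def by (intro poly_fun_sum poly_mult poly_const) auto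
  then show ?thesis by (subst bilinear_axis_expansion[OF assms(1)]) simp
qed

lemma poly_map_bilinear:
  assumes "bilinear f" and "poly_map x" and "poly_map y"
  shows "poly_map (\<lambda>z. f (x z) (y z) :: real^'k)"
  unfolding poly_map_def
proof
  fix i
  have "bilinear (\<lambda>u v. f u v $ i)"
    using assms(1) unfolding bilinear_def
    by (auto intro: linear_compose[unfolded o_def, OF _ bounded_linear_vec_nth[THEN bounded_linear.linear]])
  then show "poly_fun (\<lambda>z. f (x z) (y z) $ i)" by (rule poly_fun_bilinear[OF _ assms(2,3)])
qed

section \<open>The spectral theorem for \<open>Q\<close>-symmetric operators\<close>

lemma linear_term_eq_0_if_nonpos:
  fixes a b :: real
  assumes "\<And>t. a * t + b * t\<^sup>2 \<le> 0"
  shows "a = 0"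
proof -
  have "\<bar>a\<bar> \<le> e" if "e > 0" for e
  proof -
    define t where "t = e / (\<bar>b\<bar> + 1)"
    have t: "t > 0" using that by (simp add: t_def)
    have "\<bar>a\<bar> * t \<le> - b * t\<^sup>2"
      using assms[of t] assms[of "-t"] t by (cases "a \<ge> 0") auto
    then have "\<bar>a\<bar> * t \<le> (- b * t) * t" by (simp add: power2_eq_square)
    then have "\<bar>a\<bar> \<le> - b * t" using t by (rule mult_right_le_imp_le)
    also have "\<dots> \<le> (\<bar>b\<bar> + 1) * t" using t by (intro mult_right_mono) auto
    also have "\<dots> = e" using t_def by simp
    finally show ?thesis .
  qed
  then show ?thesis by (metis abs_le_zero_iff add_0 field_le_epsilon)
qed

locale scalar_product =
  fixes Q :: "real^'n \<Rightarrow> real^'n \<Rightarrow> real"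
  assumes bilinear: "bilinear Q"
    and commute: "Q x y = Q y x"
    and positive: "x \<noteq> 0 \<Longrightarrow> 0 < Q x x"
begin

lemma linear_Q_left: "linear (\<lambda>x. Q x y)" and linear_Q_right: "linear (Q x)"
  using bilinear unfolding bilinear_def by auto

lemma Q_scale_left: "Q (c *\<^sub>R x) y = c * Q x y"
  and Q_scale_right: "Q x (c *\<^sub>R y) = c * Q x y"
  using bilinear_lmul[OF bilinear] bilinear_rmul[OF bilinear] by simp_all

lemma Q_sum_left: "Q (\<Sum>i\<in>S. f i) y = (\<Sum>i\<in>S. Q (f i) y)"
  and Q_sum_right: "Q x (\<Sum>i\<in>S. f i) = (\<Sum>i\<in>S. Q x (f i))"
  using linear_sum[OF linear_Q_left] linear_sum[OF linear_Q_right] by auto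

lemmas Q_simps [simp] = bilinear_ladd[OF bilinear] bilinear_radd[OF bilinear]
  bilinear_lsub[OF bilinear] bilinear_rsub[OF bilinear]
  bilinear_lzero[OF bilinear] bilinear_rzero[OF bilinear]
  Q_scale_left Q_scale_right Q_sum_left Q_sum_right

lemma Q_self_eq_0_iff [simp]: "Q x x = 0 \<longleftrightarrow> x = 0"
  using positive by force

lemma continuous_on_Q:
  "continuous_on S f \<Longrightarrow> continuous_on S g \<Longrightarrow> continuous_on S (\<lambda>x. Q (f x) (g x))"
  using bilinear bilinear_conv_bounded_bilinear bounded_bilinear.continuous_on by blast

lemma Q_coercive: "\<exists>c>0. \<forall>x. c * (norm x)\<^sup>2 \<le> Q x x"
proof -
  have cont: "continuous_on (sphere 0 1) (\<lambda>x. Q x x)" by (intro continuous_on_Q continuous_on_id)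
  obtain x0 where x0: "x0 \<in> sphere 0 1" "\<And>x. x \<in> sphere 0 1 \<Longrightarrow> Q x0 x0 \<le> Q x x"
    using continuous_attains_inf[OF compact_sphere _ cont] by auto
  have "Q x0 x0 * (norm x)\<^sup>2 \<le> Q x x" for x
  proof (cases "x = 0")
    case False
    then have "Q x0 x0 \<le> Q (inverse (norm x) *\<^sub>R x) (inverse (norm x) *\<^sub>R x)"
      by (intro x0(2)) simp
    with False show ?thesis by (simp add: field_simps power2_eq_square)
  qed simp
  moreover have "0 < Q x0 x0" using x0(1) by (intro positive) auto
  ultimately show ?thesis by blast
qed

lemma Q_normalize: "x \<noteq> 0 \<Longrightarrow> Q (inverse (sqrt (Q x x)) *\<^sub>R x) (inverse (sqrt (Q x x)) *\<^sub>R x) = 1"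
  using positive[of x] by (simp add: field_simps)

lemma rayleigh_maximum_exists:
  assumes W: "subspace W" and nontrivial: "W \<noteq> {0}"
  obtains x where "x \<in> W" "Q x x = 1" "\<And>z. z \<in> W \<Longrightarrow> Q (A *v z) z \<le> Q (A *v x) x * Q z z"
proof -
  obtain c where c: "c > 0" "\<And>x. c * (norm x)\<^sup>2 \<le> Q x x" using Q_coercive by blast
  define K where "K = W \<inter> {x. Q x x = 1}"
  have "closed K" unfolding K_def
    by (intro closed_Int closed_subspace[OF W] closed_Collect_eq continuous_on_Q
        continuous_on_id continuous_on_const)
  moreover have "K \<subseteq> cball 0 (sqrt (1 / c))"
  proof
    fix x assume "x \<in> K"
    then have "c * (norm x)\<^sup>2 \<le> 1" using c(2)[of x] by (simp add: K_def)
    then have "(norm x)\<^sup>2 \<le> 1 / c" using c(1) by (simp add: field_simps)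
    then show "x \<in> cball 0 (sqrt (1 / c))" by (simp add: real_le_rsqrt)
  qed
  ultimately have "compact K" using bounded_cball bounded_subset compact_eq_bounded_closed by blast
  obtain y where y: "y \<in> W" "y \<noteq> 0" using nontrivial W subspace_0 by blast
  then have "inverse (sqrt (Q y y)) *\<^sub>R y \<in> K"
    unfolding K_def using Q_normalize subspace_scale[OF W] by blast
  then have "K \<noteq> {}" by blast
  moreover have "continuous_on K (\<lambda>x. Q (A *v x) x)"
    by (intro continuous_on_Q continuous_on_id linear_continuous_on
        matrix_vector_mul_bounded_linear)
  ultimately obtain x where x: "x \<in> K" "\<And>z. z \<in> K \<Longrightarrow> Q (A *v z) z \<le> Q (A *v x) x"
    using continuous_attains_sup[OF \<open>compact K\<close>] by blast
  have "Q (A *v z) z \<le> Q (A *v x) x * Q z z" if "z \<in> W" for z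
  proof (cases "z = 0")
    case False
    define s where "s = inverse (sqrt (Q z z))"
    have "s *\<^sub>R z \<in> K" unfolding K_def s_def using that False Q_normalize subspace_scale[OF W] by blast
    from x(2)[OF this] have "s * s * Q (A *v z) z \<le> Q (A *v x) x"
      by (simp add: matrix_vector_mult_scaleR mult.assoc)
    moreover have "s * s = inverse (Q z z)"
      using positive[OF False] by (simp add: s_def inverse_mult_distrib[symmetric])
    ultimately show ?thesis using positive[OF False] by (simp add: field_simps)
  qed simp
  then show thesis using that x(1) unfolding K_def by blast
qed

lemma rayleigh_maximizer_is_eigenvector:
  assumes sym: "symmetric_op Q A" and W: "subspace W" and invariant: "\<And>x. x \<in> W \<Longrightarrow> A *v x \<in> W"
    and "x \<in> W" and at_x: "Q (A *v x) x = l * Q x x"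
    and max: "\<And>z. z \<in> W \<Longrightarrow> Q (A *v z) z \<le> l * Q z z"
  shows "A *v x = l *\<^sub>R x"
proof -
  define d where "d = A *v x - l *\<^sub>R x"
  have first_variation: "2 * Q d y = 0" if "y \<in> W" for y
  proof (rule linear_term_eq_0_if_nonpos)
    fix t
    have "x + t *\<^sub>R y \<in> W" using \<open>x \<in> W\<close> that W by (simp add: subspace_add subspace_scale)
    from max[OF this] have "Q (A *v (x + t *\<^sub>R y)) (x + t *\<^sub>R y) - l * Q (x + t *\<^sub>R y) (x + t *\<^sub>R y) \<le> 0"
      by simp
    moreover have "Q (A *v y) x = Q (A *v x) y" "Q y x = Q x y"
      using sym commute unfolding symmetric_op_def by metis+
    ultimately show "(2 * Q d y) * t + (Q (A *v y) y - l * Q y y) * t\<^sup>2 \<le> 0"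
      using at_x by (simp add: d_def matrix_vector_right_distrib matrix_vector_mult_scaleR
          algebra_simps power2_eq_square)
  qed
  have "d \<in> W"
    using \<open>x \<in> W\<close> invariant W by (simp add: d_def subspace_diff subspace_scale)
  from first_variation[OF this] have "d = 0" by simp
  then show ?thesis by (simp add: d_def)
qed

lemma invariant_subspace_has_eigenvector:
  assumes "symmetric_op Q A" and W: "subspace W" and "\<And>x. x \<in> W \<Longrightarrow> A *v x \<in> W"
    and "W \<noteq> {0}"
  obtains x where "x \<in> W" "Q x x = 1" "A *v x = Q (A *v x) x *\<^sub>R x"
proof -
  obtain x where "x \<in> W" "Q x x = 1" "\<And>z. z \<in> W \<Longrightarrow> Q (A *v z) z \<le> Q (A *v x) x * Q z z"
    using rayleigh_maximum_exists[OF W \<open>W \<noteq> {0}\<close>] by blast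
  with rayleigh_maximizer_is_eigenvector[OF assms(1-3)] that show thesis by simp
qed

lemma subspace_Q_orthogonal: "subspace {x. \<forall>v\<in>S. Q v x = 0}"
  unfolding subspace_def by auto

lemma Q_span_eq_0: "x \<in> span S \<Longrightarrow> (\<And>w. w \<in> S \<Longrightarrow> Q a w = 0) \<Longrightarrow> Q a x = 0"
  using span_induct[of x S "\<lambda>x. Q a x = 0"] subspace_Q_orthogonal[of "{a}"] by auto

definition orthonormal_eigenset :: "real^'n^'n \<Rightarrow> (real^'n) set \<Rightarrow> bool" where
  "orthonormal_eigenset A S \<longleftrightarrow> finite S \<and> (\<forall>v\<in>S. Q v v = 1 \<and> (\<exists>c. A *v v = c *\<^sub>R v)) \<and>
     (\<forall>v\<in>S. \<forall>w\<in>S. v \<noteq> w \<longrightarrow> Q v w = 0)"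

lemma orthogonal_complement_nonzero:
  assumes "finite S" and unit: "\<And>v. v \<in> S \<Longrightarrow> Q v v = 1"
    and orth: "\<And>v w. v \<in> S \<Longrightarrow> w \<in> S \<Longrightarrow> v \<noteq> w \<Longrightarrow> Q v w = 0"
    and "card S < CARD('n)"
  shows "{x. \<forall>v\<in>S. Q v x = 0} \<noteq> {0}"
proof
  assume complement_0: "{x. \<forall>v\<in>S. Q v x = 0} = {0}"
  have "x \<in> span S" for x
  proof -
    have "Q u (x - (\<Sum>v\<in>S. Q v x *\<^sub>R v)) = 0" if "u \<in> S" for u
    proof -
      have "(\<Sum>v\<in>S. Q v x * Q u v) = (\<Sum>v\<in>S. if v = u then Q u x else 0)"
        using unit orth that by (intro sum.cong) auto
      then show ?thesis using that \<open>finite S\<close> by simp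
    qed
    then have "x - (\<Sum>v\<in>S. Q v x *\<^sub>R v) \<in> {x. \<forall>v\<in>S. Q v x = 0}" by blast
    with complement_0 have "x = (\<Sum>v\<in>S. Q v x *\<^sub>R v)" by simp
    also have "\<dots> \<in> span S" by (intro span_sum span_scale span_base)
    finally show ?thesis .
  qed
  then have "CARD('n) \<le> card S" using dim_le_card[of UNIV S] \<open>finite S\<close> by auto
  with \<open>card S < CARD('n)\<close> show False by simp
qed

lemma orthonormal_eigenset_extend:
  assumes sym: "symmetric_op Q A" and S: "orthonormal_eigenset A S" and card: "card S < CARD('n)"
  obtains e where "e \<notin> S" "orthonormal_eigenset A (insert e S)"
proof -
  define W where "W = {x. \<forall>v\<in>S. Q v x = 0}"
  have finite: "finite S" and orth: "\<And>v w. v \<in> S \<Longrightarrow> w \<in> S \<Longrightarrow> v \<noteq> w \<Longrightarrow> Q v w = 0"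
    using S unfolding orthonormal_eigenset_def by blast+
  have W: "subspace W" unfolding W_def by (rule subspace_Q_orthogonal)
  have nonzero: "W \<noteq> {0}"
    unfolding W_def using S card
    by (intro orthogonal_complement_nonzero) (auto simp: orthonormal_eigenset_def)
  have invariant: "A *v z \<in> W" if "z \<in> W" for z
  proof -
    have "Q v (A *v z) = 0" if "v \<in> S" for v
    proof -
      obtain c where "A *v v = c *\<^sub>R v" using S \<open>v \<in> S\<close> unfolding orthonormal_eigenset_def by blast
      moreover have "Q v (A *v z) = Q (A *v v) z" using sym unfolding symmetric_op_def by simp
      ultimately have "Q v (A *v z) = c * Q v z" by simp
      then show ?thesis using \<open>z \<in> W\<close> \<open>v \<in> S\<close> unfolding W_def by simp
    qed
    then show ?thesis unfolding W_def by blast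
  qed
  obtain e where e: "e \<in> W" "Q e e = 1" "A *v e = Q (A *v e) e *\<^sub>R e"
    using invariant_subspace_has_eigenvector[OF sym W invariant nonzero] by blast
  have "e \<notin> S" using e unfolding W_def by force
  moreover have "orthonormal_eigenset A (insert e S)"
    unfolding orthonormal_eigenset_def
  proof (intro conjI ballI impI)
    fix v w assume "v \<in> insert e S" "w \<in> insert e S" "v \<noteq> w"
    then show "Q v w = 0" using orth e(1) commute[of e] unfolding W_def by auto
  qed (use finite S e in \<open>auto simp: orthonormal_eigenset_def\<close>)
  ultimately show thesis using that by blast
qed

lemma orthonormal_eigenset_exists:
  assumes "symmetric_op Q A" and "k \<le> CARD('n)"
  shows "\<exists>S. orthonormal_eigenset A S \<and> card S = k"
  using assms(2)
proof (induction k)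
  case 0
  show ?case by (intro exI[of _ "{}"]) (simp add: orthonormal_eigenset_def)
next
  case (Suc k)
  then obtain S where S: "orthonormal_eigenset A S" "card S = k" by auto
  then obtain e where "e \<notin> S" "orthonormal_eigenset A (insert e S)"
    using orthonormal_eigenset_extend[OF assms(1)] Suc.prems by (metis Suc_le_lessD)
  with S show ?case by (intro exI[of _ "insert e S"]) (simp add: orthonormal_eigenset_def)
qed

definition orthonormal_frame :: "('n \<Rightarrow> real^'n) \<Rightarrow> bool" where
  "orthonormal_frame v \<longleftrightarrow> (\<forall>i j. Q (v i) (v j) = (if i = j then 1 else 0))"

theorem spectral_theorem:
  assumes "symmetric_op Q A"
  obtains v where "orthonormal_frame v" "\<And>i. A *v v i = Q (A *v v i) (v i) *\<^sub>R v i"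
proof -
  obtain S where S: "orthonormal_eigenset A S" "card S = CARD('n)"
    using orthonormal_eigenset_exists[OF assms] by blast
  moreover have "finite S" using S(1) unfolding orthonormal_eigenset_def by blast
  ultimately obtain v where v: "bij_betw v (UNIV :: 'n set) S"
    using finite_same_card_bij[of "UNIV :: 'n set" S] by auto
  then have vS: "v i \<in> S" and v_eq: "v i = v j \<longleftrightarrow> i = j" for i j
    by (auto simp: bij_betw_def inj_eq)
  have "orthonormal_frame v"
    using S(1) vS v_eq unfolding orthonormal_eigenset_def orthonormal_frame_def by simp
  moreover have "A *v v i = Q (A *v v i) (v i) *\<^sub>R v i" for i
  proof -
    obtain c where "A *v v i = c *\<^sub>R v i" "Q (v i) (v i) = 1"
      using S(1) vS unfolding orthonormal_eigenset_def by blast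
    then show ?thesis by simp
  qed
  ultimately show thesis using that by blast
qed

lemma orthonormal_frame_exists: obtains v where "orthonormal_frame v"
proof -
  have "symmetric_op Q (mat 1)" unfolding symmetric_op_def by (simp add: matrix_vector_mul_lid)
  with spectral_theorem that show thesis by blast
qed

lemma orthonormal_frame_inj: "orthonormal_frame v \<Longrightarrow> inj v"
  unfolding orthonormal_frame_def inj_def by (metis zero_neq_one)

lemma span_orthonormal_frame:
  assumes "orthonormal_frame v"
  shows "span (range v) = UNIV"
proof -
  have "independent (range v)"
  proof
    assume "dependent (range v)"
    then obtain i where "v i \<in> span (range v - {v i})" unfolding dependent_def by blast
    moreover have "Q (v i) w = 0" if "w \<in> range v - {v i}" for w
      using assms that unfolding orthonormal_frame_def by auto
    ultimately have "Q (v i) (v i) = 0" by (rule Q_span_eq_0)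
    then show False using assms unfolding orthonormal_frame_def by (metis one_neq_zero)
  qed
  moreover have "card (range v) = CARD('n)"
    using orthonormal_frame_inj[OF assms] by (simp add: card_image)
  ultimately show ?thesis
    using card_ge_dim_independent[of "range v" UNIV] by auto
qed

lemma orthonormal_frame_sum:
  assumes "orthonormal_frame v"
  shows "(\<Sum>i\<in>UNIV. Q (v i) x *\<^sub>R v i) = x"
proof -
  have inj: "inj v" using orthonormal_frame_inj[OF assms] .
  have "x \<in> span (range v)" using span_orthonormal_frame[OF assms] by simp
  then obtain c where "x = (\<Sum>w\<in>range v. c w *\<^sub>R w)"
    using span_finite[of "range v"] by auto
  also have "\<dots> = (\<Sum>i\<in>UNIV. c (v i) *\<^sub>R v i)"
    using sum.reindex[OF inj, of "\<lambda>w. c w *\<^sub>R w"] by simp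
  finally have x: "x = (\<Sum>i\<in>UNIV. c (v i) *\<^sub>R v i)" .
  have "Q (v j) x = c (v j)" for j
  proof -
    have "Q (v j) x = (\<Sum>i\<in>UNIV. c (v i) * Q (v j) (v i))" by (subst x) simp
    also have "\<dots> = (\<Sum>i\<in>UNIV. if i = j then c (v j) else 0)"
      using assms unfolding orthonormal_frame_def by (intro sum.cong) auto
    finally show ?thesis by simp
  qed
  then show ?thesis by (simp add: x[symmetric])
qed

lemma linear_frame_expansion:
  assumes "orthonormal_frame v" and "linear f"
  shows "f x = (\<Sum>i\<in>UNIV. Q (v i) x * f (v i))"
proof -
  have "f x = f (\<Sum>i\<in>UNIV. Q (v i) x *\<^sub>R v i)"
    by (simp add: orthonormal_frame_sum[OF assms(1)])
  also have "\<dots> = (\<Sum>i\<in>UNIV. Q (v i) x * f (v i))"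
    by (simp add: linear_sum[OF assms(2)] linear_scale[OF assms(2)])
  finally show ?thesis .
qed

lemma frame_sum_independent:
  assumes u: "orthonormal_frame u" and v: "orthonormal_frame v" and "linear f" "linear g"
  shows "(\<Sum>i\<in>UNIV. f (v i) * g (v i) :: real) = (\<Sum>i\<in>UNIV. f (u i) * g (u i))"
proof -
  have "(\<Sum>i\<in>UNIV. f (v i) * g (v i)) = (\<Sum>i\<in>UNIV. \<Sum>j\<in>UNIV. Q (v i) (u j) * f (v i) * g (u j))"
  proof (rule sum.cong[OF refl])
    fix i
    show "f (v i) * g (v i) = (\<Sum>j\<in>UNIV. Q (v i) (u j) * f (v i) * g (u j))"
      by (subst linear_frame_expansion[OF u \<open>linear g\<close>, of "v i"])
        (simp add: sum_distrib_left commute ac_simps)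
  qed
  also have "\<dots> = (\<Sum>j\<in>UNIV. (\<Sum>i\<in>UNIV. Q (v i) (u j) * f (v i)) * g (u j))"
    by (subst sum.swap) (simp add: sum_distrib_right)
  also have "\<dots> = (\<Sum>j\<in>UNIV. f (u j) * g (u j))"
    by (simp add: linear_frame_expansion[OF v \<open>linear f\<close>, symmetric])
  finally show ?thesis .
qed

end

locale eigenframe = scalar_product Q for Q :: "real^'n \<Rightarrow> real^'n \<Rightarrow> real" +
  fixes A :: "real^'n^'n" and v :: "'n \<Rightarrow> real^'n" and lam :: "'n \<Rightarrow> real"
  assumes symmetric: "symmetric_op Q A" and frame: "orthonormal_frame v"
    and eigen: "\<And>i. A *v v i = lam i *\<^sub>R v i"
begin

lemma Q_frame: "Q (v i) (v j) = (if i = j then 1 else 0)"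
  using frame unfolding orthonormal_frame_def by blast

lemma frame_nonzero: "v i \<noteq> 0"
  using Q_frame[of i i] by auto

lemma matrix_vector_mult_expansion: "A *v x = (\<Sum>i\<in>UNIV. (lam i * Q (v i) x) *\<^sub>R v i)"
proof -
  have "A *v x = A *v (\<Sum>i\<in>UNIV. Q (v i) x *\<^sub>R v i)"
    by (simp add: orthonormal_frame_sum[OF frame])
  also have "\<dots> = (\<Sum>i\<in>UNIV. (lam i * Q (v i) x) *\<^sub>R v i)"
    by (simp add: linear_sum[OF matrix_vector_mul_linear] matrix_vector_mult_scaleR eigen mult.commute)
  finally show ?thesis .
qed

lemma lam_eq_eigenvalue: assumes "A *v w = c *\<^sub>R w" and "Q (v i) w \<noteq> 0" shows "lam i = c"
proof -
  have "c * Q (v i) w = Q (v i) (A *v w)" using assms(1) by simp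
  also have "\<dots> = Q (A *v v i) w" using symmetric unfolding symmetric_op_def by simp
  also have "\<dots> = lam i * Q (v i) w" by (simp add: eigen)
  finally show ?thesis using assms(2) by simp
qed

lemma nonzero_has_frame_coordinate: assumes "w \<noteq> 0" obtains i where "Q (v i) w \<noteq> 0"
proof (rule ccontr)
  assume "\<not> thesis"
  then have "\<forall>i. Q (v i) w = 0" using that by blast
  then have "w = 0" using orthonormal_frame_sum[OF frame, of w] by simp
  with assms show False by blast
qed

lemma span_eigenframe_iff:
  "x \<in> span (v ` {i. lam i \<le> a}) \<longleftrightarrow> (\<forall>i. a < lam i \<longrightarrow> Q (v i) x = 0)"
proof
  assume x: "x \<in> span (v ` {i. lam i \<le> a})"
  show "\<forall>i. a < lam i \<longrightarrow> Q (v i) x = 0"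
  proof (intro allI impI)
    fix i assume "a < lam i"
    show "Q (v i) x = 0"
      by (rule Q_span_eq_0[OF x]) (use \<open>a < lam i\<close> in \<open>auto simp: Q_frame\<close>)
  qed
next
  assume vanish: "\<forall>i. a < lam i \<longrightarrow> Q (v i) x = 0"
  have "(\<Sum>i\<in>UNIV. Q (v i) x *\<^sub>R v i) \<in> span (v ` {i. lam i \<le> a})"
  proof (intro span_sum)
    fix i
    show "Q (v i) x *\<^sub>R v i \<in> span (v ` {i. lam i \<le> a})"
    proof (cases "lam i \<le> a")
      case True
      then show ?thesis by (intro span_scale span_base) simp
    qed (simp add: vanish span_zero)
  qed
  then show "x \<in> span (v ` {i. lam i \<le> a})"
    using orthonormal_frame_sum[OF frame, of x] by simp
qed

lemma filt_space_eq: "filt_space A a = span (v ` {i. lam i \<le> a})"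
proof
  show "filt_space A a \<subseteq> span (v ` {i. lam i \<le> a})"
    unfolding filt_space_def
  proof (rule span_minimal)
    show "{w. w \<noteq> 0 \<and> (\<exists>c\<le>a. A *v w = c *\<^sub>R w)} \<subseteq> span (v ` {i. lam i \<le> a})"
    proof
      fix w assume "w \<in> {w. w \<noteq> 0 \<and> (\<exists>c\<le>a. A *v w = c *\<^sub>R w)}"
      then obtain c where "c \<le> a" "A *v w = c *\<^sub>R w" by blast
      then show "w \<in> span (v ` {i. lam i \<le> a})"
        unfolding span_eigenframe_iff using lam_eq_eigenvalue by force
    qed
  qed simp
  show "span (v ` {i. lam i \<le> a}) \<subseteq> filt_space A a"
    unfolding filt_space_def by (rule span_mono) (use eigen frame_nonzero in auto)
qed

lemma bilinear_frame_expansion: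
  assumes "bilinear br"
  shows "br x y = (\<Sum>i\<in>UNIV. \<Sum>j\<in>UNIV. (Q (v i) x * Q (v j) y) *\<^sub>R br (v i) (v j))"
proof -
  have "br x y = br (\<Sum>i\<in>UNIV. Q (v i) x *\<^sub>R v i) (\<Sum>j\<in>UNIV. Q (v j) y *\<^sub>R v j)"
    by (simp add: orthonormal_frame_sum[OF frame])
  also have "\<dots> = (\<Sum>(i,j)\<in>UNIV \<times> UNIV. (Q (v i) x * Q (v j) y) *\<^sub>R br (v i) (v j))"
    by (simp add: bilinear_sum[OF assms] bilinear_lmul[OF assms] bilinear_rmul[OF assms]
        mult.commute)
  finally show ?thesis by (simp add: sum.cartesian_product)
qed

lemma filtering_iff:
  assumes br: "bilinear br"
  shows "filtering Q br A \<longleftrightarrow>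
    (\<forall>i j k. lam i + lam j < lam k \<longrightarrow> Q (br (v i) (v j)) (v k) = 0)"
proof
  assume "filtering Q br A"
  then have filt: "br x y \<in> filt_space A (a + b)"
    if "x \<in> filt_space A a" "y \<in> filt_space A b" for x y a b
    using that unfolding filtering_def by (blast intro: span_base)
  show "\<forall>i j k. lam i + lam j < lam k \<longrightarrow> Q (br (v i) (v j)) (v k) = 0"
  proof (intro allI impI)
    fix i j k assume "lam i + lam j < lam k"
    moreover have "br (v i) (v j) \<in> filt_space A (lam i + lam j)"
      by (intro filt) (auto simp: filt_space_eq intro: span_base)
    ultimately show "Q (br (v i) (v j)) (v k) = 0"
      unfolding filt_space_eq span_eigenframe_iff by (simp add: commute)
  qed
next
  assume vanish: "\<forall>i j k. lam i + lam j < lam k \<longrightarrow> Q (br (v i) (v j)) (v k) = 0"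
  have bracket_filt: "br x y \<in> filt_space A (a + b)"
    if "x \<in> filt_space A a" "y \<in> filt_space A b" for x y a b
    unfolding filt_space_eq span_eigenframe_iff
  proof (intro allI impI)
    fix k assume "a + b < lam k"
    have summand: "Q (v i) x * (Q (v j) y * Q (v k) (br (v i) (v j))) = 0" for i j
    proof (cases "a < lam i \<or> b < lam j")
      case True
      with that show ?thesis unfolding filt_space_eq span_eigenframe_iff by auto
    next
      case False
      with \<open>a + b < lam k\<close> vanish show ?thesis by (simp add: commute)
    qed
    have "Q (v k) (br x y) =
        (\<Sum>i\<in>UNIV. \<Sum>j\<in>UNIV. Q (v i) x * (Q (v j) y * Q (v k) (br (v i) (v j))))"
      by (subst bilinear_frame_expansion[OF br]) (simp add: mult.assoc)
    then show "Q (v k) (br x y) = 0" by (simp only: summand sum.neutral_const)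
  qed
  have "span {br x y |x y. x \<in> filt_space A a \<and> y \<in> filt_space A b} \<subseteq> filt_space A (a + b)"
    for a b
  proof (rule span_minimal)
    show "subspace (filt_space A (a + b))" by (simp add: filt_space_def)
  qed (use bracket_filt in blast)
  with symmetric show "filtering Q br A" unfolding filtering_def by blast
qed

lemma Q_matrix_vector_mult_self: "Q (A *v x) x = (\<Sum>i\<in>UNIV. lam i * (Q (v i) x)\<^sup>2)"
  by (subst matrix_vector_mult_expansion) (simp add: commute power2_eq_square mult.assoc)

lemma nonneg_spectrum_iff: "nonneg_spectrum A \<longleftrightarrow> (\<forall>i. 0 \<le> lam i)"
proof
  show "nonneg_spectrum A \<Longrightarrow> \<forall>i. 0 \<le> lam i"
    unfolding nonneg_spectrum_def using eigen frame_nonzero by blast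
  show "\<forall>i. 0 \<le> lam i \<Longrightarrow> nonneg_spectrum A"
    unfolding nonneg_spectrum_def
    by (metis lam_eq_eigenvalue nonzero_has_frame_coordinate)
qed

lemma nonneg_spectrum_iff_Q_nonneg: "nonneg_spectrum A \<longleftrightarrow> (\<forall>x. 0 \<le> Q (A *v x) x)"
proof
  show "nonneg_spectrum A \<Longrightarrow> \<forall>x. 0 \<le> Q (A *v x) x"
    unfolding nonneg_spectrum_iff Q_matrix_vector_mult_self by (simp add: sum_nonneg)
next
  assume "\<forall>x. 0 \<le> Q (A *v x) x"
  then have "0 \<le> Q (A *v v i) (v i)" for i by blast
  then show "nonneg_spectrum A" unfolding nonneg_spectrum_iff by (simp add: eigen Q_frame)
qed

lemma trace_eq_sum: "trace A = (\<Sum>i\<in>UNIV. lam i)"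
proof -
  have "trace A = (\<Sum>p\<in>UNIV. (A *v axis p 1) $ p)"
    unfolding trace_def by (simp add: matrix_vector_mult_def axis_def if_distrib cong: if_cong)
  also have "\<dots> = (\<Sum>p\<in>UNIV. \<Sum>i\<in>UNIV. lam i * Q (v i) (axis p 1) * v i $ p)"
    by (simp only: matrix_vector_mult_expansion sum_component vector_scaleR_component real_scaleR_def)
  also have "\<dots> = (\<Sum>i\<in>UNIV. lam i * Q (v i) (\<Sum>p\<in>UNIV. v i $ p *\<^sub>R axis p 1))"
    by (subst sum.swap) (simp add: sum_distrib_left ac_simps)
  also have "\<dots> = (\<Sum>i\<in>UNIV. lam i)"
  proof -
    have "(\<Sum>p\<in>UNIV. v i $ p *\<^sub>R axis p 1) = v i" for i
      using basis_expansion[of "v i"] by (simp add: scalar_mult_eq_scaleR)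
    then show ?thesis by (simp del: Q_sum_right add: Q_frame)
  qed
  finally show ?thesis .
qed

lemma abs_matrix_entry_le:
  assumes lam: "\<And>i. \<bar>lam i\<bar> \<le> 1" and c: "0 < c" "\<And>x. c * (norm x)\<^sup>2 \<le> Q x x"
    and K: "0 \<le> K" "\<And>x y. \<bar>Q x y\<bar> \<le> K * (norm x * norm y)"
  shows "\<bar>A $ p $ q\<bar> \<le> real CARD('n) * (K / c)"
proof -
  have "A $ p $ q = (A *v axis q 1) $ p"
    by (simp add: matrix_vector_mult_def axis_def if_distrib cong: if_cong)
  also have "\<dots> = (\<Sum>i\<in>UNIV. lam i * Q (v i) (axis q 1) * v i $ p)"
    by (simp add: matrix_vector_mult_expansion sum_component)
  also have "\<bar>\<dots>\<bar> \<le> (\<Sum>i\<in>(UNIV::'n set). K / c)"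
  proof (rule order_trans[OF sum_abs sum_mono])
    fix i
    have norm_v: "(norm (v i))\<^sup>2 \<le> 1 / c" using c(2)[of "v i"] c(1) by (simp add: Q_frame field_simps)
    have "\<bar>lam i * Q (v i) (axis q 1) * v i $ p\<bar> \<le> 1 * (K * (norm (v i) * 1)) * norm (v i)"
      unfolding abs_mult
      using lam K(2)[of "v i" "axis q 1"] component_le_norm_cart[of "v i" p] K(1)
      by (intro mult_mono) auto
    also have "\<dots> \<le> K * (1 / c)"
      using mult_left_mono[OF norm_v K(1)] by (simp add: power2_eq_square mult.assoc)
    finally show "\<bar>lam i * Q (v i) (axis q 1) * v i $ p\<bar> \<le> K / c" by simp
  qed
  finally show ?thesis by simp
qed

end

section \<open>Positive semidefiniteness via the characteristic polynomial\<close>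

lemma scalar_product_inner: "scalar_product ((\<bullet>) :: real^'n \<Rightarrow> real^'n \<Rightarrow> real)"
  by unfold_locales
    (auto simp: inner_commute bilinear_conv_bounded_bilinear bounded_bilinear_inner)

lemma symmetric_op_inner: "transpose M = M \<Longrightarrow> symmetric_op (\<bullet>) M"
  unfolding symmetric_op_def by (metis dot_lmul_matrix transpose_matrix_vector)

lemma matrix_vector_mult_mat: "mat t *v x = t *\<^sub>R (x :: real^'n)"
proof -
  have "(\<Sum>j\<in>UNIV. (if i = j then t else 0) * x $ j) = (\<Sum>j\<in>UNIV. if i = j then t * x $ j else 0)"
    for i by (rule sum.cong) auto
  then show ?thesis by (simp add: vec_eq_iff matrix_vector_mult_def mat_def)
qed

lemma det_shift_eigenframe:
  fixes M :: "real^'n^'n"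
  assumes "eigenframe (\<bullet>) M v lam"
  shows "det (mat t + M) = (\<Prod>i\<in>UNIV. t + lam i)"
proof -
  interpret eigenframe "(\<bullet>)" M v lam by (fact assms)
  define U :: "real^'n^'n" where "U = (\<chi> p i. v i $ p)"
  have conj_entry: "(transpose U ** N ** U) $ i $ j = v i \<bullet> (N *v v j)" for N i j
    unfolding U_def by (simp add: matrix_matrix_mult_def matrix_vector_mult_def inner_vec_def
        transpose_def sum_distrib_left sum_distrib_right mult.assoc mult.left_commute)
      (rule sum.swap)
  have "(transpose U ** U) $ i $ j = (if i = j then 1 else 0)" for i j
    using conj_entry[of "mat 1" i j] by (simp add: matrix_vector_mul_lid Q_frame)
  then have "transpose U ** U = mat 1" by (simp add: vec_eq_iff mat_def)
  then have det_U: "det U * det U = 1"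
    by (metis det_I det_mul det_transpose)
  have "(mat t + M) *v v j = (t + lam j) *\<^sub>R v j" for j
    by (simp add: matrix_vector_mult_add_rdistrib matrix_vector_mult_mat eigen scaleR_add_left)
  then have "(transpose U ** (mat t + M) ** U) $ i $ j = (if i = j then t + lam i else 0)" for i j
    by (simp add: conj_entry Q_frame)
  then have "transpose U ** (mat t + M) ** U = (\<chi> i j. if i = j then t + lam i else 0)"
    by (simp add: vec_eq_iff)
  then have "det (transpose U ** (mat t + M) ** U) = (\<Prod>i\<in>UNIV. t + lam i)"
    by (simp add: det_diagonal)
  then have "(det U * det U) * det (mat t + M) = (\<Prod>i\<in>UNIV. t + lam i)"
    by (simp add: det_mul det_transpose mult_ac)
  with det_U show ?thesis by simp
qed

definition psd_form :: "('m::finite \<Rightarrow> 'm \<Rightarrow> real) \<Rightarrow> bool" where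
  "psd_form h \<longleftrightarrow> (\<forall>c::real^'m. 0 \<le> (\<Sum>a\<in>UNIV. \<Sum>b\<in>UNIV. c$a * c$b * h a b))"

lemma psd_form_symmetrize:
  fixes h :: "'m::finite \<Rightarrow> 'm \<Rightarrow> real"
  shows "psd_form h \<longleftrightarrow> psd_form (\<lambda>a b. (h a b + h b a) / 2)"
proof -
  have "(\<Sum>a\<in>UNIV. \<Sum>b\<in>UNIV. c$a * c$b * ((h a b + h b a) / 2)) =
      (\<Sum>a\<in>UNIV. \<Sum>b\<in>UNIV. c$a * c$b * h a b)" for c :: "real^'m"
  proof -
    have "(\<Sum>a\<in>UNIV. \<Sum>b\<in>UNIV. c$a * c$b * h b a) = (\<Sum>a\<in>UNIV. \<Sum>b\<in>UNIV. c$a * c$b * h a b)"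
      by (subst sum.swap) (simp add: mult.commute)
    then show ?thesis
      by (simp add: field_simps sum.distrib sum_divide_distrib[symmetric])
  qed
  then show ?thesis unfolding psd_form_def by simp
qed

lemma psd_form_matrix_iff: "psd_form (\<lambda>a b. M $ a $ b) \<longleftrightarrow> (\<forall>c. 0 \<le> (M *v c) \<bullet> c)"
  unfolding psd_form_def
  by (simp add: inner_vec_def matrix_vector_mult_def sum_distrib_left sum_distrib_right ac_simps)

lemma prod_linear_factors_coeffs_nonneg_iff:
  fixes lam :: "'i \<Rightarrow> real"
  assumes "finite I"
  shows "(\<forall>k. 0 \<le> coeff (\<Prod>i\<in>I. [:lam i, 1:]) k) \<longleftrightarrow> (\<forall>i\<in>I. 0 \<le> lam i)"
proof
  assume nonneg: "\<forall>k. 0 \<le> coeff (\<Prod>i\<in>I. [:lam i, 1:]) k"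
  show "\<forall>i\<in>I. 0 \<le> lam i"
  proof (rule ccontr)
    assume "\<not> (\<forall>i\<in>I. 0 \<le> lam i)"
    then obtain i where "i \<in> I" "lam i < 0" by force
    define P where "P = (\<Prod>i\<in>I. [:lam i, 1:])"
    have "poly P (- lam i) = 0"
      unfolding P_def poly_prod using \<open>i \<in> I\<close> assms by (auto intro: prod_zero)
    moreover have "lead_coeff P * (- lam i) ^ degree P \<le> poly P (- lam i)"
      unfolding poly_altdef
      by (rule member_le_sum) (use nonneg \<open>lam i < 0\<close> in \<open>auto simp: P_def\<close>)
    moreover have "lead_coeff P = 1" unfolding P_def by (simp add: lead_coeff_prod)
    moreover have "0 < (- lam i) ^ degree P" using \<open>lam i < 0\<close> by simp
    ultimately show False by simp
  qed
next
  show "\<forall>i\<in>I. 0 \<le> lam i \<Longrightarrow> \<forall>k. 0 \<le> coeff (\<Prod>i\<in>I. [:lam i, 1:]) k"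
    using assms
  proof (induction I rule: finite_induct)
    case (insert i I)
    then show ?case by (auto simp: coeff_mult coeff_pCons split: nat.split intro!: sum_nonneg)
  qed (simp add: coeff_1)
qed

definition det_shift_poly :: "real^'m^'m \<Rightarrow> real poly" where
  "det_shift_poly M = det (\<chi> i j. [:M $ i $ j, if i = j then 1 else 0:])"

lemma poly_det_shift_poly: "poly (det_shift_poly M) t = det (mat t + M)"
  unfolding det_shift_poly_def det_def
  by (auto simp: poly_sum poly_prod mat_def add.commute intro!: sum.cong prod.cong)

lemma psd_iff_det_shift_coeffs_nonneg:
  fixes M :: "real^'m^'m"
  assumes "transpose M = M"
  shows "psd_form (\<lambda>a b. M $ a $ b) \<longleftrightarrow> (\<forall>k\<le>CARD('m). 0 \<le> coeff (det_shift_poly M) k)"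
proof -
  interpret scalar_product "(\<bullet>) :: real^'m \<Rightarrow> real^'m \<Rightarrow> real" by (rule scalar_product_inner)
  obtain v where v: "orthonormal_frame v" "\<And>i. M *v v i = ((M *v v i) \<bullet> v i) *\<^sub>R v i"
    using spectral_theorem[OF symmetric_op_inner[OF assms]] by blast
  define lam where "lam i = (M *v v i) \<bullet> v i" for i
  interpret eigenframe "(\<bullet>)" M v lam
    by unfold_locales (use v symmetric_op_inner[OF assms] in \<open>auto simp: lam_def\<close>)
  define P where "P = (\<Prod>i\<in>UNIV. [:lam i, 1:])"
  have "poly (det_shift_poly M) = poly P"
    using det_shift_eigenframe[OF eigenframe_axioms]
    by (simp add: fun_eq_iff poly_det_shift_poly P_def poly_prod add.commute)
  then have P: "det_shift_poly M = P" by (simp add: poly_eq_poly_eq_iff)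
  have "coeff P k = 0" if "CARD('m) < k" for k
    using degree_prod_sum_le[of UNIV "\<lambda>i. [:lam i, 1:]"] that
    by (intro coeff_eq_0) (simp add: P_def)
  then have "(\<forall>k\<le>CARD('m). 0 \<le> coeff P k) \<longleftrightarrow> (\<forall>k. 0 \<le> coeff P k)"
    by (metis not_le order_refl)
  also have "\<dots> \<longleftrightarrow> nonneg_spectrum M"
    unfolding P_def nonneg_spectrum_iff by (simp add: prod_linear_factors_coeffs_nonneg_iff)
  finally show ?thesis
    by (simp add: P psd_form_matrix_iff nonneg_spectrum_iff_Q_nonneg)
qed

definition poly_coeffs :: "('a::euclidean_space \<Rightarrow> real poly) \<Rightarrow> bool" where
  "poly_coeffs F \<longleftrightarrow> (\<forall>k. poly_fun (\<lambda>x. coeff (F x) k))"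

lemma poly_coeffs_const: "poly_coeffs (\<lambda>x. p)"
  unfolding poly_coeffs_def by (auto intro: poly_const)

lemma poly_coeffs_pCons:
  assumes "poly_fun f" and "poly_coeffs G"
  shows "poly_coeffs (\<lambda>x. pCons (f x) (G x))"
  unfolding poly_coeffs_def
proof
  fix k show "poly_fun (\<lambda>x. coeff (pCons (f x) (G x)) k)"
    using assms by (cases k) (auto simp: poly_coeffs_def)
qed

lemma poly_coeffs_add: "poly_coeffs F \<Longrightarrow> poly_coeffs G \<Longrightarrow> poly_coeffs (\<lambda>x. F x + G x)"
  unfolding poly_coeffs_def by (auto intro: poly_add)

lemma poly_coeffs_mult: "poly_coeffs F \<Longrightarrow> poly_coeffs G \<Longrightarrow> poly_coeffs (\<lambda>x. F x * G x)"
  unfolding poly_coeffs_def coeff_mult by (auto intro!: poly_fun_sum poly_mult)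

lemma poly_coeffs_sum:
  "finite S \<Longrightarrow> (\<And>i. i \<in> S \<Longrightarrow> poly_coeffs (F i)) \<Longrightarrow> poly_coeffs (\<lambda>x. \<Sum>i\<in>S. F i x)"
  by (induction S rule: finite_induct) (auto intro: poly_coeffs_add poly_coeffs_const)

lemma poly_coeffs_prod:
  "finite S \<Longrightarrow> (\<And>i. i \<in> S \<Longrightarrow> poly_coeffs (F i)) \<Longrightarrow> poly_coeffs (\<lambda>x. \<Prod>i\<in>S. F i x)"
  by (induction S rule: finite_induct) (auto intro: poly_coeffs_mult poly_coeffs_const)

lemma poly_coeffs_det:
  "(\<And>i j. poly_coeffs (\<lambda>x. B x $ i $ j)) \<Longrightarrow> poly_coeffs (\<lambda>x. det (B x :: real poly^'m^'m))"
  unfolding det_def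
  by (intro poly_coeffs_sum poly_coeffs_mult poly_coeffs_const poly_coeffs_prod)
    (simp_all add: finite_permutations)

lemma poly_coeffs_det_shift_poly:
  "(\<And>i j. poly_fun (\<lambda>x. M x $ i $ j)) \<Longrightarrow> poly_coeffs (\<lambda>x. det_shift_poly (M x :: real^'m^'m))"
  unfolding det_shift_poly_def
  by (intro poly_coeffs_det) (simp add: poly_coeffs_pCons poly_coeffs_const)

lemma basic_closed_semialgebraic_psd:
  fixes h :: "'m::finite \<Rightarrow> 'm \<Rightarrow> 'a::euclidean_space \<Rightarrow> real"
  assumes "\<And>a b. poly_fun (h a b)"
  shows "basic_closed_semialgebraic {x. psd_form (\<lambda>a b. h a b x)}"
proof -
  define M :: "'a \<Rightarrow> real^'m^'m" where "M x = (\<chi> a b. (h a b x + h b a x) / 2)" for x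
  have "transpose (M x) = M x" for x
    unfolding M_def transpose_def by (simp add: vec_eq_iff add.commute)
  then have "psd_form (\<lambda>a b. h a b x) \<longleftrightarrow> (\<forall>k\<in>{..CARD('m)}. 0 \<le> coeff (det_shift_poly (M x)) k)"
    for x using psd_form_symmetrize[of "\<lambda>a b. h a b x"] psd_iff_det_shift_coeffs_nonneg[of "M x"]
    by (simp add: M_def Ball_def)
  then have "{x. psd_form (\<lambda>a b. h a b x)} =
      {x. \<forall>k\<in>{..CARD('m)}. 0 \<le> coeff (det_shift_poly (M x)) k}"
    by simp
  also have "basic_closed_semialgebraic \<dots>"
  proof (intro basic_closed_semialgebraic_all_nonneg)
    have "poly_fun (\<lambda>x. M x $ i $ j)" for i j
      unfolding M_def using poly_fun_scale[OF poly_add[OF assms assms], of "1/2"]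
      by (simp add: field_simps)
    then show "poly_fun (\<lambda>x. coeff (det_shift_poly (M x)) k)" for k
      using poly_coeffs_det_shift_poly unfolding poly_coeffs_def by blast
  qed simp
  finally show ?thesis .
qed

section \<open>A Hankel criterion for the sign of the nodes of a measure\<close>

lemma hankel_quadratic_form:
  fixes c :: "real^'r::finite" and mu w :: "'s::finite \<Rightarrow> real"
  shows "(\<Sum>a\<in>UNIV. \<Sum>b\<in>UNIV. c$a * c$b * (\<Sum>r\<in>UNIV. mu r ^ (e a + e b + 1) * w r)) =
    (\<Sum>r\<in>UNIV. w r * mu r * (\<Sum>a\<in>UNIV. c$a * mu r ^ e a)\<^sup>2)"
proof -
  have square: "w r * mu r * (\<Sum>a\<in>UNIV. c$a * mu r ^ e a)\<^sup>2 =
      (\<Sum>a\<in>UNIV. \<Sum>b\<in>UNIV. c$a * c$b * (mu r ^ (e a + e b + 1) * w r))" for r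
  proof -
    have "(\<Sum>a\<in>UNIV. c$a * mu r ^ e a)\<^sup>2 =
        (\<Sum>a\<in>UNIV. \<Sum>b\<in>UNIV. (c$a * mu r ^ e a) * (c$b * mu r ^ e b))"
      by (simp only: power2_eq_square sum_product)
    then show ?thesis by (simp add: sum_distrib_left power_add ac_simps)
  qed
  have "(\<Sum>a\<in>UNIV. \<Sum>b\<in>UNIV. c$a * c$b * (\<Sum>r\<in>UNIV. mu r ^ (e a + e b + 1) * w r)) =
      (\<Sum>a\<in>UNIV. \<Sum>b\<in>UNIV. \<Sum>r\<in>UNIV. c$a * c$b * (mu r ^ (e a + e b + 1) * w r))"
    by (simp only: sum_distrib_left)
  also have "\<dots> = (\<Sum>r\<in>UNIV. \<Sum>a\<in>UNIV. \<Sum>b\<in>UNIV. c$a * c$b * (mu r ^ (e a + e b + 1) * w r))"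
    by (subst sum.swap) (subst (2) sum.swap, rule refl)
  finally show ?thesis by (simp only: square)
qed

lemma interpolating_poly_exists:
  fixes V :: "real set"
  assumes "finite V" and "m \<notin> V"
  obtains q where "degree q \<le> card V" "poly q m = 1" "\<And>s. s \<in> V \<Longrightarrow> poly q s = 0"
proof
  let ?q = "\<Prod>s\<in>V. smult (1 / (m - s)) [:- s, 1:]"
  have "degree ?q \<le> (\<Sum>s\<in>V. degree (smult (1 / (m - s)) [:- s, 1:]))"
    by (rule degree_prod_sum_le[OF assms(1), unfolded o_def])
  also have "\<dots> \<le> (\<Sum>s\<in>V. 1)"
    by (intro sum_mono) (simp add: order_trans[OF degree_smult_le])
  finally show "degree ?q \<le> card V" by simp
  show "poly ?q m = 1"
    using assms(2) by (auto simp: poly_prod diff_divide_distrib[symmetric] intro!: prod.neutral)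
  show "poly ?q s = 0" if "s \<in> V" for s
    using that assms(1) by (auto simp: poly_prod intro!: prod_zero)
qed

lemma sum_coeff_reindex:
  fixes q :: "real poly"
  assumes e: "bij_betw e (UNIV :: 'r::finite set) {0..<CARD('r)}" and "degree q < CARD('r)"
  shows "(\<Sum>a\<in>UNIV. coeff q (e a) * t ^ e a) = poly q t"
proof -
  have "(\<Sum>a\<in>UNIV. coeff q (e a) * t ^ e a) = (\<Sum>k\<in>{0..<CARD('r)}. coeff q k * t ^ k)"
    using sum.reindex_bij_betw[OF e, of "\<lambda>k. coeff q k * t ^ k"] by simp
  also have "\<dots> = (\<Sum>k\<le>degree q. coeff q k * t ^ k)"
    by (rule sum.mono_neutral_right) (use assms(2) in \<open>auto simp: coeff_eq_0\<close>)
  finally show ?thesis by (simp add: poly_altdef)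
qed

text \<open>The quadratic form equals \<open>\<Sum>\<^sub>r w\<^sub>r \<mu>\<^sub>r p(\<mu>\<^sub>r)\<^sup>2\<close> where \<open>p\<close> has coefficient \<open>c\<^sub>a\<close> at \<open>t ^ e a\<close>;
  a negative node carrying weight is detected by a polynomial vanishing at all other nodes.\<close>
lemma hankel_psd_iff_nonneg_support:
  fixes mu w :: "'r::finite \<Rightarrow> real"
  assumes w: "\<And>r. 0 \<le> w r" and e: "bij_betw e (UNIV :: 'r set) {0..<CARD('r)}"
  shows "psd_form (\<lambda>a b. \<Sum>r\<in>UNIV. mu r ^ (e a + e b + 1) * w r) \<longleftrightarrow>
    (\<forall>r. mu r < 0 \<longrightarrow> w r = 0)"
  unfolding psd_form_def hankel_quadratic_form
proof safe
  fix r0 assume psd: "\<forall>c::real^'r. 0 \<le> (\<Sum>r\<in>UNIV. w r * mu r * (\<Sum>a\<in>UNIV. c$a * mu r ^ e a)\<^sup>2)"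
    and "mu r0 < 0"
  show "w r0 = 0"
  proof (rule ccontr)
    assume "w r0 \<noteq> 0"
    define V where "V = mu ` {r. mu r \<noteq> mu r0}"
    have "card V \<le> card {r. mu r \<noteq> mu r0}" unfolding V_def by (rule card_image_le) simp
    also have "\<dots> < CARD('r)" by (rule psubset_card_mono) auto
    finally have "card V < CARD('r)" .
    have "finite V" and "mu r0 \<notin> V" unfolding V_def by auto
    then obtain q where q: "degree q \<le> card V" "poly q (mu r0) = 1" "\<And>s. s \<in> V \<Longrightarrow> poly q s = 0"
      using interpolating_poly_exists by blast
    define c :: "real^'r" where "c = (\<chi> a. coeff q (e a))"
    have "(\<Sum>a\<in>UNIV. c$a * t ^ e a) = poly q t" for t
      unfolding c_def using sum_coeff_reindex[OF e] q(1) \<open>card V < CARD('r)\<close> by simp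
    then have "(\<Sum>r\<in>UNIV. w r * mu r * (\<Sum>a\<in>UNIV. c$a * mu r ^ e a)\<^sup>2) =
        (\<Sum>r\<in>UNIV. w r * mu r * (poly q (mu r))\<^sup>2)"
      by simp
    also have "\<dots> = (\<Sum>r\<in>{r. mu r = mu r0}. w r * mu r)"
    proof (rule sum.mono_neutral_cong_right)
      show "\<forall>r\<in>UNIV - {r. mu r = mu r0}. w r * mu r * (poly q (mu r))\<^sup>2 = 0"
        using q(3) unfolding V_def by auto
    qed (use q(2) in auto)
    also have "\<dots> = mu r0 * (\<Sum>r\<in>{r. mu r = mu r0}. w r)"
      by (simp add: sum_distrib_left mult.commute)
    also have "\<dots> < 0"
    proof -
      have "w r0 \<le> (\<Sum>r\<in>{r. mu r = mu r0}. w r)" by (rule member_le_sum) (auto intro: w)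
      with w[of r0] \<open>w r0 \<noteq> 0\<close> \<open>mu r0 < 0\<close> show ?thesis by (simp add: mult_neg_pos)
    qed
    finally show False using psd by (meson not_le)
  qed
next
  fix c :: "real^'r"
  assume "\<forall>r. mu r < 0 \<longrightarrow> w r = 0"
  then have "0 \<le> w r * mu r" for r using w[of r] by (cases "mu r < 0") auto
  then show "0 \<le> (\<Sum>r\<in>UNIV. w r * mu r * (\<Sum>a\<in>UNIV. c$a * mu r ^ e a)\<^sup>2)"
    by (intro sum_nonneg) simp
qed

section \<open>The structure form and its moments\<close>

lemma sum_rotate3:
  "(\<Sum>i\<in>I. \<Sum>j\<in>J. \<Sum>l\<in>L. f i j l) = (\<Sum>j\<in>J. \<Sum>l\<in>L. \<Sum>i\<in>I. f i j l)"
  by (subst sum.swap) (rule sum.cong[OF refl], rule sum.swap)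

locale bracket_form = scalar_product Q for Q :: "real^'n \<Rightarrow> real^'n \<Rightarrow> real" +
  fixes br :: "real^'n \<Rightarrow> real^'n \<Rightarrow> real^'n"
  assumes bilinear_br: "bilinear br"
begin

primrec deriv_form :: "real^'n^'n \<Rightarrow> nat \<Rightarrow> real^'n \<Rightarrow> real^'n \<Rightarrow> real^'n \<Rightarrow> real" where
  "deriv_form A 0 = (\<lambda>x y z. Q (br x y) z)"
| "deriv_form A (Suc k) = (\<lambda>x y z.
     deriv_form A k (A *v x) y z + deriv_form A k x (A *v y) z - deriv_form A k x y (A *v z))"

lemma linear_deriv_form:
  "linear (\<lambda>x. deriv_form A k x y z) \<and> linear (\<lambda>y. deriv_form A k x y z) \<and>
    linear (\<lambda>z. deriv_form A k x y z)"
proof (induction k arbitrary: x y z)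
  case 0
  have "linear (\<lambda>x. br x y)" "linear (br x)" for x y
    using bilinear_br unfolding bilinear_def by auto
  then show ?case
    using linear_compose[OF _ linear_Q_left] linear_Q_right by (auto simp: o_def)
next
  case (Suc k)
  have A: "linear (\<lambda>x. A *v x)" by simp
  have "linear (\<lambda>x. deriv_form A k (A *v x) y z)" "linear (\<lambda>y. deriv_form A k x (A *v y) z)"
    "linear (\<lambda>z. deriv_form A k x y (A *v z))" for x y z
    using linear_compose[OF A, unfolded o_def] Suc.IH by blast+
  with Suc.IH show ?case
    by (simp add: linear_compose_add linear_compose_sub)
qed

lemmas linear_deriv_form_1 = linear_deriv_form[THEN conjunct1]
  and linear_deriv_form_2 = linear_deriv_form[THEN conjunct2, THEN conjunct1]
  and linear_deriv_form_3 = linear_deriv_form[THEN conjunct2, THEN conjunct2]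

lemma deriv_form_eigen:
  assumes "A *v a = \<alpha> *\<^sub>R a" "A *v b = \<beta> *\<^sub>R b" "A *v c = \<gamma> *\<^sub>R c"
  shows "deriv_form A k a b c = (\<alpha> + \<beta> - \<gamma>) ^ k * Q (br a b) c"
proof (induction k)
  case (Suc k)
  have "deriv_form A (Suc k) a b c = (\<alpha> + \<beta> - \<gamma>) * deriv_form A k a b c"
    using linear_scale[OF linear_deriv_form_1] linear_scale[OF linear_deriv_form_2]
      linear_scale[OF linear_deriv_form_3]
    by (simp add: assms algebra_simps)
  with Suc.IH show ?case by simp
qed simp

lemma poly_fun_deriv_form:
  "poly_map x \<Longrightarrow> poly_map y \<Longrightarrow> poly_map z \<Longrightarrow>
    poly_fun (\<lambda>A. deriv_form A k (x A) (y A) (z A))"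
proof (induction k arbitrary: x y z)
  case 0
  then show ?case
    by (simp add: poly_fun_bilinear[OF bilinear poly_map_bilinear[OF bilinear_br]])
next
  case (Suc k)
  then show ?case by (simp add: poly_fun_diff poly_add poly_map_matrix_vector_mult)
qed

definition bracket_moment :: "real^'n^'n \<Rightarrow> nat \<Rightarrow> ('n \<Rightarrow> real^'n) \<Rightarrow> real" where
  "bracket_moment A k u =
     (\<Sum>i\<in>UNIV. \<Sum>j\<in>UNIV. \<Sum>l\<in>UNIV. deriv_form A k (u i) (u j) (u l) * Q (br (u i) (u j)) (u l))"

lemma poly_fun_bracket_moment: "poly_fun (\<lambda>A. bracket_moment A k u)"
  unfolding bracket_moment_def
  using poly_fun_deriv_form[OF poly_map_const poly_map_const poly_map_const, of k]
    poly_fun_deriv_form[OF poly_map_const poly_map_const poly_map_const, of 0]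
  by (intro poly_fun_sum poly_mult) auto

lemma bracket_moment_frame_independent:
  assumes u: "orthonormal_frame u" and v: "orthonormal_frame v"
  shows "bracket_moment A k u = bracket_moment A k v"
proof -
  define S :: "('n \<Rightarrow> real^'n) \<Rightarrow> ('n \<Rightarrow> real^'n) \<Rightarrow> ('n \<Rightarrow> real^'n) \<Rightarrow> real"
    where "S a b c = (\<Sum>i\<in>UNIV. \<Sum>j\<in>UNIV. \<Sum>l\<in>UNIV.
      deriv_form A k (a i) (b j) (c l) * deriv_form A 0 (a i) (b j) (c l))" for a b c
  have S_slot1: "S a b c = (\<Sum>j\<in>UNIV. \<Sum>l\<in>UNIV. \<Sum>i\<in>UNIV.
      deriv_form A k (a i) (b j) (c l) * deriv_form A 0 (a i) (b j) (c l))" for a b c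
    unfolding S_def by (rule sum_rotate3)
  have S_slot2: "S a b c = (\<Sum>i\<in>UNIV. \<Sum>l\<in>UNIV. \<Sum>j\<in>UNIV.
      deriv_form A k (a i) (b j) (c l) * deriv_form A 0 (a i) (b j) (c l))" for a b c
    unfolding S_def by (rule sum.cong[OF refl], rule sum.swap)
  note independent = frame_sum_independent[OF v u]
  have "S u b c = S v b c" for b c
    unfolding S_slot1
    by (rule sum.cong[OF refl], rule sum.cong[OF refl], rule independent)
      (rule linear_deriv_form_1)+
  moreover have "S a u c = S a v c" for a c
    unfolding S_slot2
    by (rule sum.cong[OF refl], rule sum.cong[OF refl], rule independent)
      (rule linear_deriv_form_2)+
  moreover have "S a b u = S a b v" for a b
    unfolding S_def
    by (rule sum.cong[OF refl], rule sum.cong[OF refl], rule independent)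
      (rule linear_deriv_form_3)+
  ultimately have "S u u u = S v v v" by simp
  then show ?thesis unfolding bracket_moment_def S_def by simp
qed

end

locale bracket_eigenframe = bracket_form Q br + eigenframe Q A v lam
  for Q :: "real^'n \<Rightarrow> real^'n \<Rightarrow> real" and br A v lam
begin

definition triple_eigenvalue :: "'n \<times> 'n \<times> 'n \<Rightarrow> real" where
  "triple_eigenvalue = (\<lambda>(i, j, l). lam i + lam j - lam l)"

definition triple_weight :: "'n \<times> 'n \<times> 'n \<Rightarrow> real" where
  "triple_weight = (\<lambda>(i, j, l). (Q (br (v i) (v j)) (v l))\<^sup>2)"

lemma bracket_moment_eigenframe:
  "bracket_moment A k v = (\<Sum>r\<in>UNIV. triple_eigenvalue r ^ k * triple_weight r)"
proof -
  have "bracket_moment A k v = (\<Sum>i\<in>UNIV. \<Sum>j\<in>UNIV. \<Sum>l\<in>UNIV.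
      (lam i + lam j - lam l) ^ k * (Q (br (v i) (v j)) (v l))\<^sup>2)"
    unfolding bracket_moment_def by (simp add: deriv_form_eigen[OF eigen eigen eigen] power2_eq_square mult.assoc)
  also have "\<dots> = (\<Sum>r\<in>UNIV. triple_eigenvalue r ^ k * triple_weight r)"
    unfolding triple_eigenvalue_def triple_weight_def
    by (simp add: sum.cartesian_product split_def UNIV_Times_UNIV[symmetric] del: UNIV_Times_UNIV)
  finally show ?thesis .
qed

lemma filtering_iff_triple_weights:
  "filtering Q br A \<longleftrightarrow> (\<forall>r. triple_eigenvalue r < 0 \<longrightarrow> triple_weight r = 0)"
  unfolding filtering_iff[OF bilinear_br] triple_eigenvalue_def triple_weight_def by auto

end

context bracket_form
begin

lemma filtering_iff_psd_hankel:
  assumes "symmetric_op Q A" and u: "orthonormal_frame u"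
    and e: "bij_betw e (UNIV :: ('n \<times> 'n \<times> 'n) set) {0..<CARD('n \<times> 'n \<times> 'n)}"
  shows "filtering Q br A \<longleftrightarrow> psd_form (\<lambda>a b. bracket_moment A (e a + e b + 1) u)"
proof -
  obtain v where v: "orthonormal_frame v" "\<And>i. A *v v i = Q (A *v v i) (v i) *\<^sub>R v i"
    using spectral_theorem[OF assms(1)] by blast
  interpret bracket_eigenframe Q br A v "\<lambda>i. Q (A *v v i) (v i)"
    by unfold_locales (use assms(1) v in auto)
  have "bracket_moment A k u = (\<Sum>r\<in>UNIV. triple_eigenvalue r ^ k * triple_weight r)" for k
    using bracket_moment_frame_independent[OF u v(1)] bracket_moment_eigenframe by simp
  moreover have "0 \<le> triple_weight r" for r by (simp add: triple_weight_def split_def)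
  ultimately show ?thesis
    using hankel_psd_iff_nonneg_support[OF _ e] filtering_iff_triple_weights by simp
qed

end

lemma norm_matrix_le_entries:
  assumes "\<And>p q. \<bar>(A::real^'n^'m) $ p $ q\<bar> \<le> B"
  shows "norm A \<le> real CARD('m) * (real CARD('n) * B)"
proof -
  have "norm A \<le> (\<Sum>p\<in>UNIV. norm (A $ p))" by (simp add: norm_vec_def L2_set_le_sum)
  also have "\<dots> \<le> (\<Sum>p\<in>(UNIV::'m set). \<Sum>q\<in>(UNIV::'n set). B)"
    by (intro sum_mono order_trans[OF norm_le_l1_cart] assms)
  finally show ?thesis by simp
qed

context scalar_product
begin

lemma bilinear_Q_matrix_vector_left: "bilinear (\<lambda>x y. Q (A *v x) y)"
  using bilinear linear_compose[OF matrix_vector_mul_linear linear_Q_left]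
  unfolding bilinear_def o_def by auto

lemma bilinear_Q_matrix_vector_right: "bilinear (\<lambda>x y. Q x (A *v y))"
  using bilinear linear_compose[OF matrix_vector_mul_linear linear_Q_right]
  unfolding bilinear_def o_def by auto

lemma symmetric_op_iff_axis:
  "symmetric_op Q A \<longleftrightarrow> (\<forall>p q. Q (A *v axis p 1) (axis q 1) = Q (axis p 1) (A *v axis q 1))"
proof
  assume "\<forall>p q. Q (A *v axis p 1) (axis q 1) = Q (axis p 1) (A *v axis q 1)"
  then have "(\<lambda>x y. Q (A *v x) y) = (\<lambda>x y. Q x (A *v y))"
    by (intro bilinear_eq_stdbasis bilinear_Q_matrix_vector_left bilinear_Q_matrix_vector_right)
      (auto simp: Basis_vec_def)
  then show "symmetric_op Q A" unfolding symmetric_op_def by metis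
qed (simp add: symmetric_op_def)

lemma nonneg_spectrum_iff_psd_gram:
  assumes "symmetric_op Q A"
  shows "nonneg_spectrum A \<longleftrightarrow> psd_form (\<lambda>a b. Q (A *v axis a 1) (axis b 1))"
proof -
  obtain v where v: "orthonormal_frame v" "\<And>i. A *v v i = Q (A *v v i) (v i) *\<^sub>R v i"
    using spectral_theorem[OF assms] by blast
  interpret eigenframe Q A v "\<lambda>i. Q (A *v v i) (v i)"
    by unfold_locales (use assms v in auto)
  have "Q (A *v c) c = (\<Sum>a\<in>UNIV. \<Sum>b\<in>UNIV. c$a * c$b * Q (A *v axis a 1) (axis b 1))" for c
    using bilinear_axis_expansion[OF bilinear_Q_matrix_vector_left] by simp
  then show ?thesis unfolding nonneg_spectrum_iff_Q_nonneg psd_form_def by simp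
qed

lemma bounded_nonneg_trace_one: "bounded {A. symmetric_op Q A \<and> nonneg_spectrum A \<and> trace A = 1}"
proof -
  obtain c where c: "0 < c" "\<And>x. c * (norm x)\<^sup>2 \<le> Q x x" using Q_coercive by blast
  obtain K where K: "0 \<le> K" "\<And>x y. \<bar>Q x y\<bar> \<le> K * (norm x * norm y)"
    using bounded_bilinear.nonneg_bounded[OF bilinear[unfolded bilinear_conv_bounded_bilinear]]
    by (force simp: ac_simps)
  have "\<bar>A $ p $ q\<bar> \<le> real CARD('n) * (K / c)"
    if A: "symmetric_op Q A" "nonneg_spectrum A" "trace A = 1" for A p q
  proof -
    obtain v where v: "orthonormal_frame v" "\<And>i. A *v v i = Q (A *v v i) (v i) *\<^sub>R v i"
      using spectral_theorem[OF A(1)] by blast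
    interpret eigenframe Q A v "\<lambda>i. Q (A *v v i) (v i)"
      by unfold_locales (use A(1) v in auto)
    have "0 \<le> Q (A *v v i) (v i)" for i using A(2) nonneg_spectrum_iff by blast
    moreover have "Q (A *v v i) (v i) \<le> 1" for i
      using member_le_sum[of i UNIV "\<lambda>i. Q (A *v v i) (v i)"] calculation A(3) trace_eq_sum
      by simp
    ultimately show ?thesis by (intro abs_matrix_entry_le c K) (simp add: abs_le_iff)
  qed
  then show ?thesis
    unfolding bounded_iff by (blast intro: norm_matrix_le_entries)
qed

end

context bracket_form
begin

lemma F_plus_eq:
  assumes "orthonormal_frame u"
    and "bij_betw e (UNIV :: ('n \<times> 'n \<times> 'n) set) {0..<CARD('n \<times> 'n \<times> 'n)}"
  shows "F_plus Q br = {A.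
    (\<forall>p q. Q (A *v axis p 1) (axis q 1) = Q (axis p 1) (A *v axis q 1)) \<and>
    psd_form (\<lambda>a b. Q (A *v axis a 1) (axis b 1)) \<and>
    psd_form (\<lambda>a b. bracket_moment A (e a + e b + 1) u) \<and>
    trace A = 1}"
proof -
  have "filtering Q br A \<and> nonneg_spectrum A \<longleftrightarrow> symmetric_op Q A \<and>
      psd_form (\<lambda>a b. Q (A *v axis a 1) (axis b 1)) \<and>
      psd_form (\<lambda>a b. bracket_moment A (e a + e b + 1) u)" for A
    using nonneg_spectrum_iff_psd_gram[of A] filtering_iff_psd_hankel[OF _ assms, of A]
    unfolding filtering_def by blast
  then show ?thesis unfolding F_plus_def symmetric_op_iff_axis by auto
qed

end

theorem lemma4p1:
  fixes br :: "real^'n \<Rightarrow> real^'n \<Rightarrow> real^'n"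
    and Q :: "real^'n \<Rightarrow> real^'n \<Rightarrow> real"
  assumes "lie_algebra br"
    and "invariant_inner_product Q br"
  shows "compact (F_plus Q br) \<and> semialgebraic (F_plus Q br)"
proof -
  interpret bracket_form Q br
    using assms unfolding lie_algebra_def invariant_inner_product_def
    by unfold_locales auto
  obtain u where u: "orthonormal_frame u" by (rule orthonormal_frame_exists)
  obtain e where e: "bij_betw e (UNIV :: ('n \<times> 'n \<times> 'n) set) {0..<CARD('n \<times> 'n \<times> 'n)}"
    using ex_bij_betw_finite_nat[of "UNIV :: ('n \<times> 'n \<times> 'n) set"] by auto
  have poly_Q_matrix: "poly_fun (\<lambda>A. Q (A *v x) y)" "poly_fun (\<lambda>A. Q x (A *v y))" for x y
    by (intro poly_fun_bilinear[OF bilinear] poly_map_matrix_vector_mult poly_map_const)+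
  have poly_trace: "poly_fun (\<lambda>A::real^'n^'n. trace A)"
    unfolding trace_def by (intro poly_fun_sum poly_fun_matrix_entry) simp
  have "basic_closed_semialgebraic (F_plus Q br)"
    unfolding F_plus_eq[OF u e] Collect_conj_eq Collect_all_eq
    by (intro basic_closed_semialgebraic_Int basic_closed_semialgebraic_INT
        basic_closed_semialgebraic_eq basic_closed_semialgebraic_psd poly_Q_matrix
        poly_fun_bracket_moment poly_trace poly_const)
      simp_all
  moreover have "bounded (F_plus Q br)"
    using bounded_nonneg_trace_one unfolding F_plus_def filtering_def by (rule bounded_subset) blast
  ultimately show ?thesis
    using basic_closed_semialgebraic_imp compact_eq_bounded_closed by blast
qed

end
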